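(* Fix $\beta>2$ and let $G_\beta,H_\beta,K_\beta,g_\beta$ and $F_\beta(\mathbf{x},r)$ be as in the context. For every $r>0$, the equation $$H_\beta(y-3r/2)+H_\beta(y)+K_\beta(y)=1,\qquad y\in(-\infty,g_\beta],$$ has a unique solution $y_2^\beta(r)$. Furthermore, the point $\big(H_\beta(y_2^\beta(r)),K_\beta(y_2^\beta(r))\big)$ is a local minimum of $F_\beta(\cdot,r)$.
   Context: $\Xi=\{(x_1,x_2): x_1,x_2\ge0,\ x_1+x_2\le1\}$, $x_0=1-x_1-x_2$, $\mathbf{v}_k=(\cos(2\pi k/3),\sin(2\pi k/3))$, and $F_\beta(\mathbf{x},r)=-\frac12|\sum_{k=0}^2x_k\mathbf{v}_k|^2+\frac1\beta\sum_{k=0}^2x_k\log(3x_k)+r\,x_0-\frac r2(x_1+x_2)$ (potential with external field of magnitude $r$, angle $\pi$). $G_\beta(x)=\frac1\beta\log x-\frac32x$ on $(0,\infty)$, $l_\beta=2/(3\beta)$, $g_\beta=G_\beta(l_\beta)$; for $y<g_\beta$, $H_\beta(y)<l_\beta<K_\beta(y)$ are the two solutions of $G_\beta(x)=y$, and $H_\beta(g_\beta)=K_\beta(g_\beta)=l_\beta$. *)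

theory Defs
  imports "HOL-Analysis.Analysis"
begin

definition Xi :: "(real \<times> real) set" where
  "Xi = {(x1, x2). x1 \<ge> 0 \<and> x2 \<ge> 0 \<and> x1 + x2 \<le> 1}"

definition vk :: "nat \<Rightarrow> real \<times> real" where
  "vk k = (cos (2 * pi * real k / 3), sin (2 * pi * real k / 3))"

text \<open>Potential with external field of magnitude r and angle pi. Convention 0 log 0 = 0
  (automatic since ln 0 = 0 in Isabelle).\<close>
definition F :: "real \<Rightarrow> real \<times> real \<Rightarrow> real \<Rightarrow> real" where
  "F \<beta> x r = (let x1 = fst x; x2 = snd x; x0 = 1 - x1 - x2;
                  xs = (\<lambda>k::nat. if k = 0 then x0 else if k = 1 then x1 else x2) in
     - (1/2) * (norm (\<Sum>k<3. xs k *\<^sub>R vk k))\<^sup>2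
     + (1/\<beta>) * (\<Sum>k<3. xs k * ln (3 * xs k))
     + r * x0 - (r/2) * (x1 + x2))"

definition G :: "real \<Rightarrow> real \<Rightarrow> real" where
  "G \<beta> x = (1/\<beta>) * ln x - (3/2) * x"

definition l :: "real \<Rightarrow> real" where
  "l \<beta> = 2 / (3 * \<beta>)"

definition g :: "real \<Rightarrow> real" where
  "g \<beta> = G \<beta> (l \<beta>)"

text \<open>For y \<le> g \<beta>: the smaller / larger solution of G \<beta> x = y.\<close>
definition H :: "real \<Rightarrow> real \<Rightarrow> real" where
  "H \<beta> y = (THE x. 0 < x \<and> x \<le> l \<beta> \<and> G \<beta> x = y)"

definition K :: "real \<Rightarrow> real \<Rightarrow> real" where
  "K \<beta> y = (THE x. l \<beta> \<le> x \<and> G \<beta> x = y)"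

definition is_local_min_on :: "(real \<times> real \<Rightarrow> real) \<Rightarrow> (real \<times> real) set \<Rightarrow> real \<times> real \<Rightarrow> bool" where
  "is_local_min_on f S p \<longleftrightarrow> p \<in> S \<and> (\<exists>e>0. \<forall>z\<in>S. dist z p < e \<longrightarrow> f p \<le> f z)"

end

theory Submission
  imports Defs "HOL-Real_Asymp.Real_Asymp"
begin

text \<open>Write \<open>phi \<beta> r y = H \<beta> (y - 3 r / 2) + H \<beta> y + K \<beta> y = x\<^sub>0 + x\<^sub>1 + x\<^sub>2\<close>. Below \<open>g \<beta>\<close> its
  derivative is \<open>\<Sum> 1 / dG \<beta> x\<^sub>i\<close>, where \<open>dG \<beta> = G' \<beta>\<close>, and this sum is negative whenever
  \<open>x\<^sub>0 \<le> x\<^sub>1 < l < x\<^sub>2\<close>, \<open>G x\<^sub>1 = G x\<^sub>2\<close> and \<open>x\<^sub>0 + x\<^sub>1 + x\<^sub>2 \<ge> 2 / \<beta>\<close>; after the substitution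
  \<open>t = 3 \<beta> x / 2\<close> this is an elementary fact about the level sets of \<open>ln t - t\<close>. Since
  \<open>2 / \<beta> < 1\<close>, \<open>phi\<close> is strictly decreasing wherever it is at least \<open>1\<close>, so the value \<open>1\<close>, which it
  takes by the intermediate value theorem, is taken only once.

  At a solution \<open>(x\<^sub>1, x\<^sub>2)\<close> is a critical point of \<open>F\<close>, whose Hessian is the quadratic form
  \<open>a\<^sub>0 (d\<^sub>1 + d\<^sub>2)\<^sup>2 + a\<^sub>1 d\<^sub>1\<^sup>2 + a\<^sub>2 d\<^sub>2\<^sup>2\<close> with \<open>a\<^sub>i = dG \<beta> x\<^sub>i\<close>. As \<open>a\<^sub>0, a\<^sub>1 > 0 > a\<^sub>2\<close>, negativity of
  \<open>\<Sum> 1 / a\<^sub>i\<close> is positivity of \<open>a\<^sub>0 a\<^sub>1 + a\<^sub>0 a\<^sub>2 + a\<^sub>1 a\<^sub>2\<close>, so the form is positive definite and the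
  critical point is a local minimum.\<close>

section \<open>The profile \<open>G\<close> and its inverse branches\<close>

definition dG :: "real \<Rightarrow> real \<Rightarrow> real" where
  "dG \<beta> x = 1 / (\<beta> * x) - 3 / 2"

lemma G_has_derivative: "\<beta> > 0 \<Longrightarrow> 0 < x \<Longrightarrow> (G \<beta> has_real_derivative dG \<beta> x) (at x)"
  unfolding G_def dG_def by (auto intro!: derivative_eq_intros simp: field_simps)

lemma continuous_on_G: "\<beta> > 0 \<Longrightarrow> 0 < a \<Longrightarrow> continuous_on {a..b} (G \<beta>)"
  unfolding G_def by (auto intro!: continuous_intros)

lemma l_pos: "\<beta> > 0 \<Longrightarrow> 0 < l \<beta>"
  unfolding l_def by simp

lemma dG_pos: "\<beta> > 0 \<Longrightarrow> 0 < x \<Longrightarrow> x < l \<beta> \<Longrightarrow> 0 < dG \<beta> x"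
  unfolding dG_def l_def by (simp add: field_simps)

lemma dG_neg: "\<beta> > 0 \<Longrightarrow> l \<beta> < x \<Longrightarrow> dG \<beta> x < 0"
  using l_pos[of \<beta>] unfolding dG_def l_def by (simp add: field_simps)

lemma dG_antimono: "\<beta> > 0 \<Longrightarrow> 0 < x \<Longrightarrow> x \<le> x' \<Longrightarrow> dG \<beta> x' \<le> dG \<beta> x"
  unfolding dG_def by (simp add: frac_le)

lemma G_strict_mono:
  assumes "\<beta> > 0" "0 < a" "a < b" "b \<le> l \<beta>"
  shows "G \<beta> a < G \<beta> b"
proof (rule DERIV_pos_imp_increasing_open[OF assms(3)])
  fix x assume "a < x" "x < b"
  then show "\<exists>y. (G \<beta> has_real_derivative y) (at x) \<and> y > 0"
    using assms G_has_derivative dG_pos by (metis less_le_trans order.strict_trans)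
qed (use assms continuous_on_G in auto)

lemma G_strict_antimono:
  assumes "\<beta> > 0" "l \<beta> \<le> a" "a < b"
  shows "G \<beta> b < G \<beta> a"
proof (rule DERIV_neg_imp_decreasing_open[OF assms(3)])
  fix x assume "a < x" "x < b"
  then show "\<exists>y. (G \<beta> has_real_derivative y) (at x) \<and> y < 0"
    using assms G_has_derivative dG_neg l_pos by (metis le_less_trans order.strict_trans)
qed (use assms l_pos[of \<beta>] continuous_on_G in auto)

lemma G_eq_below_l_exists:
  assumes "\<beta> > 0" "y \<le> g \<beta>"
  shows "\<exists>x. 0 < x \<and> x \<le> l \<beta> \<and> G \<beta> x = y"
proof -
  have "filterlim (G \<beta>) at_bot (at_right 0)"
    unfolding G_def using assms(1) by real_asymp
  then have "\<forall>\<^sub>F x in at_right 0. G \<beta> x \<le> y"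
    using filterlim_at_bot by blast
  then obtain b where "b > 0" and b: "\<And>x. 0 < x \<Longrightarrow> x < b \<Longrightarrow> G \<beta> x \<le> y"
    unfolding eventually_at_right_field by blast
  define a where "a = min (b / 2) (l \<beta>)"
  have a: "0 < a" "a \<le> l \<beta>"
    using \<open>b > 0\<close> l_pos[OF assms(1)] by (auto simp: a_def)
  have "G \<beta> a \<le> y"
    using \<open>b > 0\<close> a(1) min.cobounded1[of "b / 2" "l \<beta>"] by (intro b) (simp_all add: a_def)
  moreover have "y \<le> G \<beta> (l \<beta>)"
    using assms(2) by (simp add: g_def)
  ultimately obtain x where "a \<le> x" "x \<le> l \<beta>" "G \<beta> x = y"
    using a IVT'[of "G \<beta>" a y "l \<beta>"] continuous_on_G[OF assms(1) a(1)] by auto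
  with a show ?thesis
    by (intro exI[of _ x]) auto
qed

lemma G_eq_above_l_exists:
  assumes "\<beta> > 0" "y \<le> g \<beta>"
  shows "\<exists>x \<ge> l \<beta>. G \<beta> x = y"
proof -
  have "filterlim (G \<beta>) at_bot at_top"
    unfolding G_def using assms(1) by real_asymp
  then have "\<forall>\<^sub>F x in at_top. G \<beta> x \<le> y"
    using filterlim_at_bot by blast
  then obtain b where b: "\<And>x. b \<le> x \<Longrightarrow> G \<beta> x \<le> y"
    unfolding eventually_at_top_linorder by blast
  have "G \<beta> (max b (l \<beta>)) \<le> y" "y \<le> G \<beta> (l \<beta>)"
    using b assms(2) by (auto simp: g_def)
  moreover have "continuous_on {l \<beta>..max b (l \<beta>)} (G \<beta>)"
    using continuous_on_G assms(1) l_pos by blast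
  ultimately have "\<exists>x. l \<beta> \<le> x \<and> x \<le> max b (l \<beta>) \<and> G \<beta> x = y"
    by (intro IVT2') simp_all
  then show ?thesis by blast
qed

lemma H_G:
  assumes "\<beta> > 0" "0 < x" "x \<le> l \<beta>"
  shows "H \<beta> (G \<beta> x) = x"
  unfolding H_def
proof (rule the_equality)
  fix x' assume "0 < x' \<and> x' \<le> l \<beta> \<and> G \<beta> x' = G \<beta> x"
  then show "x' = x"
    using G_strict_mono[OF assms(1)] assms by (metis less_irrefl linorder_neqE_linordered_idom)
qed (use assms in simp)

lemma K_G:
  assumes "\<beta> > 0" "l \<beta> \<le> x"
  shows "K \<beta> (G \<beta> x) = x"
  unfolding K_def
proof (rule the_equality)
  fix x' assume "l \<beta> \<le> x' \<and> G \<beta> x' = G \<beta> x"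
  then show "x' = x"
    using G_strict_antimono[OF assms(1)] assms by (metis less_irrefl linorder_neqE_linordered_idom)
qed (use assms in simp)

lemma H_spec:
  assumes "\<beta> > 0" "y \<le> g \<beta>"
  shows "0 < H \<beta> y" "H \<beta> y \<le> l \<beta>" "G \<beta> (H \<beta> y) = y"
  using G_eq_below_l_exists[OF assms] H_G[OF assms(1)] by metis+

lemma K_spec:
  assumes "\<beta> > 0" "y \<le> g \<beta>"
  shows "l \<beta> \<le> K \<beta> y" "G \<beta> (K \<beta> y) = y"
  using G_eq_above_l_exists[OF assms] K_G[OF assms(1)] by metis+

lemma H_less_l: "\<beta> > 0 \<Longrightarrow> y < g \<beta> \<Longrightarrow> H \<beta> y < l \<beta>"
  using H_spec[of \<beta> y] unfolding g_def by (metis less_le order.strict_implies_order)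

lemma K_greater_l: "\<beta> > 0 \<Longrightarrow> y < g \<beta> \<Longrightarrow> l \<beta> < K \<beta> y"
  using K_spec[of \<beta> y] unfolding g_def by (metis less_le order.strict_implies_order)

lemma H_g: "\<beta> > 0 \<Longrightarrow> H \<beta> (g \<beta>) = l \<beta>"
  unfolding g_def using H_G l_pos by simp

lemma K_g: "\<beta> > 0 \<Longrightarrow> K \<beta> (g \<beta>) = l \<beta>"
  unfolding g_def using K_G by simp

lemma H_strict_mono:
  assumes "\<beta> > 0" "y' < y" "y \<le> g \<beta>"
  shows "H \<beta> y' < H \<beta> y"
proof (rule ccontr)
  assume "\<not> H \<beta> y' < H \<beta> y"
  then consider "H \<beta> y = H \<beta> y'" | "H \<beta> y < H \<beta> y'"
    by linarith
  then have "G \<beta> (H \<beta> y) \<le> G \<beta> (H \<beta> y')"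
  proof cases
    case 2
    moreover have "0 < H \<beta> y" "H \<beta> y' \<le> l \<beta>"
      using H_spec assms by auto
    ultimately show ?thesis
      using G_strict_mono[OF assms(1)] less_imp_le by blast
  qed simp
  moreover have "G \<beta> (H \<beta> y) = y" "G \<beta> (H \<beta> y') = y'"
    using H_spec(3) assms by auto
  ultimately show False
    using assms(2) by simp
qed

lemma isCont_H:
  assumes "\<beta> > 0" "y < g \<beta>"
  shows "isCont (H \<beta>) y"
proof -
  have H: "0 < H \<beta> y" "H \<beta> y < l \<beta>" "G \<beta> (H \<beta> y) = y"
    using H_spec H_less_l assms by auto
  have "isCont (H \<beta>) (G \<beta> (H \<beta> y))"
  proof (rule isCont_inverse_function2[of "H \<beta> y / 2" "H \<beta> y" "l \<beta>"])
    fix z assume "H \<beta> y / 2 \<le> z" "z \<le> l \<beta>"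
    moreover from this have "0 < z" using H by linarith
    ultimately show "H \<beta> (G \<beta> z) = z" "isCont (G \<beta>) z"
      using H_G G_has_derivative DERIV_isCont assms(1) by blast+
  qed (use H in auto)
  with H show ?thesis by simp
qed

lemma isCont_K:
  assumes "\<beta> > 0" "y < g \<beta>"
  shows "isCont (K \<beta>) y"
proof -
  have K: "l \<beta> < K \<beta> y" "G \<beta> (K \<beta> y) = y" "0 < l \<beta>"
    using K_spec K_greater_l l_pos assms by auto
  have "isCont (K \<beta>) (G \<beta> (K \<beta> y))"
  proof (rule isCont_inverse_function2[of "l \<beta>" "K \<beta> y" "2 * K \<beta> y"])
    fix z assume "l \<beta> \<le> z" "z \<le> 2 * K \<beta> y"
    moreover from this have "0 < z" using K by linarith
    ultimately show "K \<beta> (G \<beta> z) = z" "isCont (G \<beta>) z"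
      using K_G G_has_derivative DERIV_isCont assms(1) by blast+
  qed (use K in auto)
  with K show ?thesis by simp
qed

lemma G_inverse_has_derivative:
  assumes "\<beta> > 0" "y < g \<beta>" "0 < h y" "isCont h y" "\<And>z. z < g \<beta> \<Longrightarrow> G \<beta> (h z) = z"
  shows "(h has_real_derivative 1 / dG \<beta> (h y)) (at y)"
proof -
  have "h y \<noteq> l \<beta>"
    using assms(2,5) unfolding g_def by force
  then have "dG \<beta> (h y) \<noteq> 0"
    using dG_pos[OF assms(1,3)] dG_neg[OF assms(1)] by (metis less_irrefl linorder_neqE_linordered_idom)
  then have "(h has_real_derivative inverse (dG \<beta> (h y))) (at y)"
    using assms by (intro DERIV_inverse_function[where f = "G \<beta>" and a = "y - 1" and b = "g \<beta>"]
        G_has_derivative) auto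
  then show ?thesis
    by (simp add: inverse_eq_divide)
qed

lemma H_has_derivative:
  "\<beta> > 0 \<Longrightarrow> y < g \<beta> \<Longrightarrow> (H \<beta> has_real_derivative 1 / dG \<beta> (H \<beta> y)) (at y)"
  by (rule G_inverse_has_derivative) (auto intro: isCont_H H_spec)

lemma K_has_derivative:
  "\<beta> > 0 \<Longrightarrow> y < g \<beta> \<Longrightarrow> (K \<beta> has_real_derivative 1 / dG \<beta> (K \<beta> y)) (at y)"
  using l_pos K_greater_l by (intro G_inverse_has_derivative isCont_K K_spec) (auto intro: less_trans)

section \<open>Level pairs of \<open>ln t - t\<close>\<close>

lemma ln_sub_strict_antimono:
  fixes a b :: real
  assumes "1 \<le> a" "a < b"
  shows "ln b - b < ln a - a"
proof -
  have "(\<lambda>x. ln x - x) b < (\<lambda>x. ln x - x) a"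
  proof (rule DERIV_neg_imp_decreasing_open[OF assms(2)])
    fix x :: real assume x: "a < x" "x < b"
    then have "((\<lambda>x. ln x - x) has_real_derivative 1 / x - 1) (at x)"
      using assms by (auto intro!: derivative_eq_intros)
    moreover have "1 / x - 1 < 0"
      using x assms by simp
    ultimately show "\<exists>y. ((\<lambda>x. ln x - x) has_real_derivative y) (at x) \<and> y < 0"
      by blast
  qed (use assms in \<open>auto intro!: continuous_intros\<close>)
  then show ?thesis by simp
qed

lemma ln_sub_three_minus_twice_lt:
  fixes t :: real
  assumes "1 / 2 \<le> t" "t < 1"
  shows "ln (3 - 2 * t) - (3 - 2 * t) < ln t - t"
proof -
  define f where "f x = ln x - x - ln (3 - 2 * x) + (3 - 2 * x)" for x :: real
  have "f 1 < f t"
  proof (rule DERIV_neg_imp_decreasing_open[OF assms(2)])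
    fix x :: real assume x: "t < x" "x < 1"
    then have "(f has_real_derivative 1 / x - 1 + 2 / (3 - 2 * x) - 2) (at x)"
      unfolding f_def using assms by (auto intro!: derivative_eq_intros simp: field_simps)
    moreover have "1 / x - 1 + 2 / (3 - 2 * x) - 2 = 3 * (2 * x - 1) * (x - 1) / (x * (3 - 2 * x))"
      using x assms by (simp add: field_simps)
    moreover have "3 * (2 * x - 1) * (x - 1) / (x * (3 - 2 * x)) < 0"
      using x assms by (intro divide_neg_pos mult_pos_neg) auto
    ultimately show "\<exists>y. (f has_real_derivative y) (at x) \<and> y < 0"
      by auto
  qed (use assms in \<open>auto simp: f_def intro!: continuous_intros\<close>)
  then show ?thesis
    by (simp add: f_def)
qed

lemma ln_sub_twice_div_lt:
  fixes t :: real
  assumes "1 / 3 < t" "t \<le> 1 / 2"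
  shows "ln (2 * t / (3 * t - 1)) - 2 * t / (3 * t - 1) < ln t - t"
proof -
  define f where "f x = - x + ln (3 * x - 1) - ln 2 + 2 * x / (3 * x - 1)" for x :: real
  have "f (1 / 2) \<le> f t"
  proof (cases "t = 1 / 2")
    case False
    with assms have "t < 1 / 2"
      by simp
    show ?thesis
    proof (rule less_imp_le, rule DERIV_neg_imp_decreasing_open[OF \<open>t < 1 / 2\<close>])
      fix x :: real assume x: "t < x" "x < 1 / 2"
      have "(f has_real_derivative - 1 + 3 / (3 * x - 1) + (2 * (3 * x - 1) - 2 * x * 3) / (3 * x - 1)\<^sup>2) (at x)"
        unfolding f_def using x assms
        by (auto intro!: derivative_eq_intros simp: field_simps power2_eq_square)
      moreover have "- 1 + 3 / (3 * x - 1) + (2 * (3 * x - 1) - 2 * x * 3) / (3 * x - 1)\<^sup>2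
          = - ((3 * x - 1) - 1) * ((3 * x - 1) - 2) / (3 * x - 1)\<^sup>2"
      proof -
        have "3 * x - 1 > 0"
          using x assms by simp
        then show ?thesis
          by (simp add: divide_simps) (simp add: algebra_simps power2_eq_square)
      qed
      moreover have "- ((3 * x - 1) - 1) * ((3 * x - 1) - 2) / (3 * x - 1)\<^sup>2 < 0"
        using x assms by (intro divide_neg_pos) (auto intro!: mult_pos_neg)
      ultimately show "\<exists>y. (f has_real_derivative y) (at x) \<and> y < 0"
        by auto
    next
      show "continuous_on {t..1 / 2} f"
        unfolding f_def using assms by (auto intro!: continuous_intros)
    qed
  qed (simp only: order_refl)
  moreover have "ln 2 < (3 / 4 :: real)"
  proof -
    have "1 + 3 / 4 + (3 / 4)\<^sup>2 / 2 \<le> exp (3 / 4 :: real)"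
      by (rule exp_lower_Taylor_quadratic) simp
    then have "2 < exp (3 / 4 :: real)"
      by (simp add: power2_eq_square)
    then show ?thesis
      by (metis ln_exp ln_less_cancel_iff exp_gt_zero zero_less_numeral)
  qed
  then have "0 < f (1 / 2)"
    by (simp add: f_def ln_div)
  moreover have "ln t - t - (ln (2 * t / (3 * t - 1)) - 2 * t / (3 * t - 1)) = f t"
    using assms by (simp add: f_def ln_div ln_mult)
  ultimately show ?thesis
    by linarith
qed

text \<open>For a level pair \<open>t1 < 1 < t2\<close> of \<open>ln t - t\<close>: first \<open>t1 < 1/2\<close>, by comparing \<open>t2\<close>
  with \<open>3 - 2 t1\<close>; then \<open>t2 < 2 t1 / (3 t1 - 1)\<close>, which is the claim.\<close>
lemma ln_sub_level_pair_ratio_lt: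
  fixes t1 t2 :: real
  assumes t: "0 < t1" "t1 < 1" "1 < t2" and level: "ln t1 - t1 = ln t2 - t2"
    and sum: "3 \<le> 2 * t1 + t2"
  shows "2 * t1 / (1 - t1) < t2 / (t2 - 1)"
proof -
  have t1_half: "t1 < 1 / 2"
  proof (rule ccontr)
    assume "\<not> t1 < 1 / 2"
    then have "1 / 2 \<le> t1"
      by simp
    then have "ln (3 - 2 * t1) - (3 - 2 * t1) < ln t2 - t2"
      using ln_sub_three_minus_twice_lt[OF _ t(2)] level by simp
    moreover have "1 \<le> 3 - 2 * t1" "3 - 2 * t1 \<le> t2"
      using t sum by auto
    ultimately show False
      using ln_sub_strict_antimono[of "3 - 2 * t1" t2] by (cases "3 - 2 * t1 = t2") auto
  qed
  have "t2 * (3 * t1 - 1) < 2 * t1"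
  proof (cases "t1 \<le> 1 / 3")
    case True
    then have "t2 * (3 * t1 - 1) \<le> 0"
      using t by (intro mult_nonneg_nonpos) auto
    then show ?thesis
      using t by simp
  next
    case False
    define w where "w = 2 * t1 / (3 * t1 - 1)"
    have "ln w - w < ln t2 - t2"
      unfolding w_def using ln_sub_twice_div_lt[of t1] False t1_half level by fastforce
    moreover have "1 \<le> w"
      unfolding w_def using False t by (simp add: le_divide_eq)
    ultimately have "t2 < w"
      using ln_sub_strict_antimono[of w t2] by (cases "w = t2"; cases "w < t2") auto
    then show ?thesis
      unfolding w_def using False by (simp add: less_divide_eq)
  qed
  then have "2 * t1 * (t2 - 1) < t2 * (1 - t1)"
    by (simp add: algebra_simps)
  then show ?thesis
    using t by (simp add: divide_simps)
qed

lemma ln_sub_level_triple_ratio_sum_neg: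
  fixes t0 t1 t2 :: real
  assumes "t0 \<le> t1" "0 < t1" "t1 < 1" "1 < t2" "ln t1 - t1 = ln t2 - t2" "3 \<le> t0 + t1 + t2"
  shows "t0 / (1 - t0) + t1 / (1 - t1) + t2 / (1 - t2) < 0"
proof -
  have "t0 / (1 - t0) \<le> t1 / (1 - t1)"
    using assms by (simp add: divide_simps) (simp add: algebra_simps)
  moreover have "2 * t1 / (1 - t1) < t2 / (t2 - 1)"
    using ln_sub_level_pair_ratio_lt assms by simp
  moreover have "t2 / (1 - t2) = - (t2 / (t2 - 1))"
    by (metis divide_minus_right minus_diff_eq)
  ultimately show ?thesis
    by simp
qed

lemma inverse_dG_eq:
  assumes "\<beta> > 0" "0 < x" "3 * \<beta> * x \<noteq> 2"
  shows "1 / dG \<beta> x = 2 / 3 * ((3 * \<beta> * x / 2) / (1 - 3 * \<beta> * x / 2))"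
proof -
  have "2 - 3 * \<beta> * x \<noteq> 0"
    using assms by simp
  then show ?thesis
    using assms unfolding dG_def by (simp add: field_simps)
qed

lemma inverse_dG_sum_neg:
  assumes \<beta>: "\<beta> > 0" and x: "0 < x0" "x0 \<le> x1" "x1 < l \<beta>" "l \<beta> < x2"
    and level: "G \<beta> x1 = G \<beta> x2" and sum: "2 / \<beta> \<le> x0 + x1 + x2"
  shows "1 / dG \<beta> x0 + 1 / dG \<beta> x1 + 1 / dG \<beta> x2 < 0"
proof -
  define s where "s = 3 * \<beta> / 2"
  define t0 t1 t2 where "t0 = s * x0" "t1 = s * x1" "t2 = s * x2"
  have s: "0 < s" and ls: "s * l \<beta> = 1"
    using \<beta> by (simp_all add: s_def l_def)
  have pos: "0 < x1" "0 < x2"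
    using x l_pos[OF \<beta>] by linarith+
  have "s * x1 < s * l \<beta>" "s * l \<beta> < s * x2"
    using x s by simp_all
  then have t: "t0 \<le> t1" "0 < t1" "t1 < 1" "1 < t2"
    using x pos s ls by (auto simp: t0_t1_t2_def)
  have "3 \<le> t0 + t1 + t2"
    using mult_left_mono[OF sum, of s] s \<beta> by (simp add: t0_t1_t2_def s_def algebra_simps)
  moreover have "ln t1 - t1 = ln t2 - t2"
  proof -
    have "ln x1 - s * x1 = ln x2 - s * x2"
      using level \<beta> unfolding G_def s_def by (simp add: field_simps)
    then show ?thesis
      using s pos by (simp add: t0_t1_t2_def ln_mult)
  qed
  ultimately have "t0 / (1 - t0) + t1 / (1 - t1) + t2 / (1 - t2) < 0"
    using ln_sub_level_triple_ratio_sum_neg t by blast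
  moreover have "1 / dG \<beta> x = 2 / 3 * (s * x / (1 - s * x))" if "0 < x" "s * x \<noteq> 1" for x
    using inverse_dG_eq[OF \<beta> that(1)] that by (simp add: s_def mult.assoc)
  then have "1 / dG \<beta> x0 = 2 / 3 * (t0 / (1 - t0))" "1 / dG \<beta> x1 = 2 / 3 * (t1 / (1 - t1))"
      "1 / dG \<beta> x2 = 2 / 3 * (t2 / (1 - t2))"
    using t x pos unfolding t0_t1_t2_def by auto
  ultimately show ?thesis
    by linarith
qed

section \<open>The equation \<open>phi \<beta> r y = 1\<close>\<close>

lemma level_attained_once_if_deriv_neg:
  fixes f f' :: "real \<Rightarrow> real"
  assumes "a \<le> b" "f a = c" "f b = c"
    and der: "\<And>y. a \<le> y \<Longrightarrow> y \<le> b \<Longrightarrow> (f has_real_derivative f' y) (at y)"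
    and neg: "\<And>y. a \<le> y \<Longrightarrow> y \<le> b \<Longrightarrow> c \<le> f y \<Longrightarrow> f' y < 0"
  shows "a = b"
proof (rule ccontr)
  assume "a \<noteq> b"
  with assms(1) have "a < b"
    by simp
  have "continuous_on {a..b} f"
    using der by (intro continuous_at_imp_continuous_on ballI DERIV_isCont) auto
  then obtain m where m: "m \<in> {a..b}" and max: "\<And>y. y \<in> {a..b} \<Longrightarrow> f y \<le> f m"
    using continuous_attains_sup[of "{a..b}" f] \<open>a < b\<close> by auto
  text \<open>If the maximum is only attained at \<open>a\<close>, it is also attained at \<open>b\<close>.\<close>
  obtain m' where m': "a < m'" "m' \<le> b" and max': "\<And>y. y \<in> {a..b} \<Longrightarrow> f y \<le> f m'"
  proof (cases "m = a")
    case True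
    then show thesis
      using that[of b] max assms(2,3) \<open>a < b\<close> by simp
  next
    case False
    then show thesis
      using that[of m] max m by simp
  qed
  have "c \<le> f m'"
    using max'[of b] assms(3) \<open>a < b\<close> by simp
  then have "f' m' < 0"
    using neg m' by simp
  then obtain d where "d > 0" and d: "\<And>h. 0 < h \<Longrightarrow> h < d \<Longrightarrow> f m' < f (m' - h)"
    using DERIV_neg_dec_left[OF der] m' by (metis less_imp_le)
  obtain h where "0 < h" "h < d" "h < m' - a"
    using field_lbound_gt_zero[OF \<open>d > 0\<close>, of "m' - a"] m' by auto
  moreover have "a \<le> m' - h" "m' - h \<le> b"
    using calculation m' by auto
  ultimately show False
    using d[of h] max'[of "m' - h"] by simp
qed

definition phi :: "real \<Rightarrow> real \<Rightarrow> real \<Rightarrow> real" where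
  "phi \<beta> r y = H \<beta> (y - 3 * r / 2) + H \<beta> y + K \<beta> y"

lemma phi_has_derivative:
  assumes "\<beta> > 0" "r \<ge> 0" "y < g \<beta>"
  shows "(phi \<beta> r has_real_derivative
      1 / dG \<beta> (H \<beta> (y - 3 * r / 2)) + 1 / dG \<beta> (H \<beta> y) + 1 / dG \<beta> (K \<beta> y)) (at y)"
proof -
  have "y - 3 * r / 2 < g \<beta>"
    using assms by simp
  then have "(H \<beta> has_real_derivative 1 / dG \<beta> (H \<beta> (y - 3 * r / 2))) (at (y - 3 * r / 2))"
    using H_has_derivative assms(1) by blast
  moreover have "((\<lambda>y. y - 3 * r / 2) has_real_derivative 1) (at y)"
    by (auto intro!: derivative_eq_intros)
  ultimately have "((\<lambda>y. H \<beta> (y - 3 * r / 2)) has_real_derivative 1 / dG \<beta> (H \<beta> (y - 3 * r / 2))) (at y)"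
    using DERIV_chain2 by fastforce
  then show ?thesis
    unfolding phi_def[abs_def]
    using assms by (intro DERIV_add H_has_derivative K_has_derivative) auto
qed

lemma phi_deriv_neg:
  assumes "\<beta> > 0" "r \<ge> 0" "y < g \<beta>" "2 / \<beta> \<le> phi \<beta> r y"
  shows "1 / dG \<beta> (H \<beta> (y - 3 * r / 2)) + 1 / dG \<beta> (H \<beta> y) + 1 / dG \<beta> (K \<beta> y) < 0"
proof (rule inverse_dG_sum_neg[OF assms(1)])
  have "y - 3 * r / 2 < g \<beta>"
    using assms by simp
  then show "0 < H \<beta> (y - 3 * r / 2)"
    using H_spec assms(1) by simp
  show "H \<beta> (y - 3 * r / 2) \<le> H \<beta> y"
    using H_strict_mono[OF assms(1), of "y - 3 * r / 2" y] assms by (cases "r = 0") auto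
  show "H \<beta> y < l \<beta>" "l \<beta> < K \<beta> y"
    using H_less_l K_greater_l assms by auto
  show "G \<beta> (H \<beta> y) = G \<beta> (K \<beta> y)"
    using H_spec K_spec assms by simp
  show "2 / \<beta> \<le> H \<beta> (y - 3 * r / 2) + H \<beta> y + K \<beta> y"
    using assms(4) by (simp add: phi_def)
qed

lemma three_l_lt_one: "\<beta> > 2 \<Longrightarrow> 3 * l \<beta> < 1"
  unfolding l_def by simp

lemma phi_g_lt_one:
  assumes "\<beta> > 2" "r \<ge> 0"
  shows "phi \<beta> r (g \<beta>) < 1"
proof -
  have "\<beta> > 0"
    using assms by simp
  then have "H \<beta> (g \<beta> - 3 * r / 2) \<le> l \<beta>" "H \<beta> (g \<beta>) = l \<beta>" "K \<beta> (g \<beta>) = l \<beta>"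
    using H_spec H_g K_g assms(2) by auto
  then show ?thesis
    using three_l_lt_one[OF assms(1)] by (simp add: phi_def)
qed

lemma phi_eq_one_below_g:
  assumes "\<beta> > 2" "r \<ge> 0" "y \<le> g \<beta>" "phi \<beta> r y = 1"
  shows "y < g \<beta>"
  using phi_g_lt_one[OF assms(1,2)] assms(3,4) by (cases "y = g \<beta>") auto

lemma isCont_phi: "\<beta> > 0 \<Longrightarrow> r \<ge> 0 \<Longrightarrow> y < g \<beta> \<Longrightarrow> isCont (phi \<beta> r) y"
  by (rule DERIV_isCont[OF phi_has_derivative])

lemma phi_eq_one_exists:
  assumes "\<beta> > 2" "r \<ge> 0"
  shows "\<exists>y \<le> g \<beta>. phi \<beta> r y = 1"
proof -
  have \<beta>: "\<beta> > 0"
    using assms by simp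
  text \<open>\<open>K\<close> takes the values \<open>1\<close> and \<open>1 - 2 l\<close> at these two arguments.\<close>
  define a b where "a = G \<beta> 1" "b = G \<beta> (1 - 2 * l \<beta>)"
  have l: "0 < l \<beta>" "l \<beta> < 1 - 2 * l \<beta>"
    using l_pos three_l_lt_one assms by auto
  have "a < b" "b < g \<beta>"
    using G_strict_antimono[OF \<beta>] l unfolding a_b_def g_def by auto
  have "1 \<le> phi \<beta> r a"
  proof -
    have "0 < H \<beta> (a - 3 * r / 2)" "0 < H \<beta> a"
      using H_spec \<beta> \<open>a < b\<close> \<open>b < g \<beta>\<close> assms(2) by auto
    moreover have "K \<beta> a = 1"
      unfolding a_b_def using K_G \<beta> l by simp
    ultimately show ?thesis
      by (simp add: phi_def)
  qed
  moreover have "phi \<beta> r b \<le> 1"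
  proof -
    have "H \<beta> (b - 3 * r / 2) \<le> l \<beta>" "H \<beta> b \<le> l \<beta>"
      using H_spec \<beta> \<open>b < g \<beta>\<close> assms(2) by auto
    moreover have "K \<beta> b = 1 - 2 * l \<beta>"
      unfolding a_b_def using K_G \<beta> l by simp
    ultimately show ?thesis
      by (simp add: phi_def)
  qed
  moreover have "continuous_on {a..b} (phi \<beta> r)"
    using \<open>b < g \<beta>\<close> by (intro continuous_at_imp_continuous_on ballI isCont_phi \<beta> assms(2)) auto
  ultimately obtain y where "y \<le> b" "phi \<beta> r y = 1"
    using IVT2'[of "phi \<beta> r" b 1 a] \<open>a < b\<close> by auto
  moreover from this have "y \<le> g \<beta>"
    using \<open>b < g \<beta>\<close> by simp
  ultimately show ?thesis
    by blast
qed

lemma phi_eq_one_unique: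
  assumes "\<beta> > 2" "r \<ge> 0" "y \<le> g \<beta>" "phi \<beta> r y = 1" "y' \<le> g \<beta>" "phi \<beta> r y' = 1"
  shows "y = y'"
proof -
  have \<beta>: "\<beta> > 0" "2 / \<beta> < 1"
    using assms by auto
  have "a = b" if "a \<le> b" "b \<le> g \<beta>" "phi \<beta> r a = 1" "phi \<beta> r b = 1" for a b
  proof (rule level_attained_once_if_deriv_neg[OF that(1,3,4)])
    have "b < g \<beta>"
      using phi_eq_one_below_g assms(1,2) that(2,4) .
    then show "(phi \<beta> r has_real_derivative
        1 / dG \<beta> (H \<beta> (y - 3 * r / 2)) + 1 / dG \<beta> (H \<beta> y) + 1 / dG \<beta> (K \<beta> y)) (at y)"
      if "a \<le> y" "y \<le> b" for y
      using phi_has_derivative[OF \<beta>(1) assms(2)] that by simp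
    show "1 / dG \<beta> (H \<beta> (y - 3 * r / 2)) + 1 / dG \<beta> (H \<beta> y) + 1 / dG \<beta> (K \<beta> y) < 0"
      if "a \<le> y" "y \<le> b" "1 \<le> phi \<beta> r y" for y
      using phi_deriv_neg[OF \<beta>(1) assms(2)] \<open>b < g \<beta>\<close> \<beta>(2) that by simp
  qed
  then show ?thesis
    using assms by (metis linorder_le_cases)
qed

section \<open>Local minimality\<close>

definition F_site :: "real \<Rightarrow> real \<Rightarrow> real" where
  "F_site \<beta> x = - 3 / 4 * x\<^sup>2 + 1 / \<beta> * (x * ln (3 * x))"

lemma vk_values: "vk 0 = (1, 0)" "vk 1 = (- 1 / 2, sqrt 3 / 2)" "vk 2 = (- 1 / 2, - (sqrt 3 / 2))"
proof -
  show "vk 0 = (1, 0)"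
    by (simp add: vk_def)
  show "vk 1 = (- 1 / 2, sqrt 3 / 2)"
    by (simp add: vk_def cos_120 sin_120)
  have "2 * pi * real 2 / 3 = pi / 3 + pi"
    by simp
  then show "vk 2 = (- 1 / 2, - (sqrt 3 / 2))"
    unfolding vk_def by (simp only: sin_periodic_pi cos_periodic_pi) (simp add: sin_60 cos_60)
qed

lemma F_eq_F_site_sum:
  "F \<beta> (u, v) r = 1 / 4 + F_site \<beta> (1 - u - v) + F_site \<beta> u + F_site \<beta> v + r * (1 - u - v) - r / 2 * (u + v)"
proof -
  have sum3: "(\<Sum>k<3. f k) = f 0 + f 1 + f 2" for f :: "nat \<Rightarrow> 'a::comm_monoid_add"
    by (simp add: numeral_3_eq_3 numeral_2_eq_2 add.commute add.left_commute)
  have norm_sq: "(norm (a, b))\<^sup>2 = a\<^sup>2 + b\<^sup>2" for a b :: real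
    by (simp add: norm_Pair)
  have "u * sqrt 3 / 2 - v * sqrt 3 / 2 = (u - v) * sqrt 3 / 2"
    by (simp add: algebra_simps)
  then have "(u * sqrt 3 / 2 - v * sqrt 3 / 2)\<^sup>2 = (u - v)\<^sup>2 * (sqrt 3)\<^sup>2 / 4"
    by (simp only: power_mult_distrib power_divide) simp
  then have sq: "(u * sqrt 3 / 2 - v * sqrt 3 / 2)\<^sup>2 = 3 * (u - v)\<^sup>2 / 4"
    by simp
  show ?thesis
    unfolding F_def Let_def sum3 vk_values
    apply (simp add: norm_sq F_site_def power2_eq_square algebra_simps flip: power2_eq_square)
    apply (simp only: sq)
    apply (simp add: power2_eq_square field_simps)
    done
qed

lemma F_site_lower_quadratic:
  assumes "\<beta> > 0" "0 < \<delta>" "\<delta> < x" "\<bar>d\<bar> \<le> \<delta>"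
  shows "F_site \<beta> x + (G \<beta> x + (ln 3 + 1) / \<beta>) * d + dG \<beta> (x + \<delta>) / 2 * d\<^sup>2 \<le> F_site \<beta> (x + d)"
proof (cases "d = 0")
  case False
  define F_site' where "F_site' t = - 3 / 2 * t + (ln (3 * t) + 1) / \<beta>" for t
  define diff where "diff m = [F_site \<beta>, F_site', dG \<beta>] ! m" for m :: nat
  have "(diff m has_real_derivative diff (Suc m) t) (at t)" if "m < 2" "0 < t" for m t
  proof -
    have "m = 0 \<or> m = 1"
      using that by auto
    then show ?thesis
      unfolding diff_def F_site_def F_site'_def dG_def using that assms(1)
      by (auto intro!: derivative_eq_intros simp: field_simps power2_eq_square)
  qed
  then obtain t where t: "if x + d < x then x + d < t \<and> t < x else x < t \<and> t < x + d"
    and taylor: "F_site \<beta> (x + d) =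
      (\<Sum>m<2. diff m x / fact m * (x + d - x) ^ m) + diff 2 t / fact 2 * (x + d - x) ^ 2"
    using Taylor[of 2 diff "F_site \<beta>" "x - \<delta>" "x + \<delta>" x "x + d"] assms False
    by (force simp: diff_def abs_le_iff)
  have "0 < t" "t \<le> x + \<delta>"
    using t assms by (auto simp: abs_le_iff split: if_splits)
  then have "dG \<beta> (x + \<delta>) / 2 * d\<^sup>2 \<le> dG \<beta> t / 2 * d\<^sup>2"
    using dG_antimono assms(1) by (intro mult_right_mono divide_right_mono) auto
  moreover have "F_site \<beta> (x + d) = F_site \<beta> x + F_site' x * d + dG \<beta> t / 2 * d\<^sup>2"
    using taylor by (simp add: diff_def numeral_2_eq_2)
  moreover have "F_site' x = G \<beta> x + (ln 3 + 1) / \<beta>"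
    unfolding F_site'_def G_def using assms by (simp add: ln_mult field_simps)
  ultimately show ?thesis
    by simp
qed simp

lemma quadratic_form_nonneg:
  fixes c0 c1 c2 d1 d2 :: real
  assumes "0 < c0" "0 < c1" "0 \<le> c0 * c1 + c0 * c2 + c1 * c2"
  shows "0 \<le> c0 * (d1 + d2)\<^sup>2 + c1 * d1\<^sup>2 + c2 * d2\<^sup>2"
proof -
  have "(c0 + c1) * (c0 * (d1 + d2)\<^sup>2 + c1 * d1\<^sup>2 + c2 * d2\<^sup>2)
      = ((c0 + c1) * d1 + c0 * d2)\<^sup>2 + (c0 * c1 + c0 * c2 + c1 * c2) * d2\<^sup>2"
    by (simp add: power2_eq_square algebra_simps)
  also have "\<dots> \<ge> 0"
    using assms by simp
  finally show ?thesis
    using assms by (simp add: zero_le_mult_iff)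
qed

lemma dG_shift_hessian_pos:
  assumes \<beta>: "\<beta> > 0" and pos: "0 < x0" "0 < x1" "0 < x2"
    and hess: "0 < dG \<beta> x0" "0 < dG \<beta> x1"
      "0 < dG \<beta> x0 * dG \<beta> x1 + dG \<beta> x0 * dG \<beta> x2 + dG \<beta> x1 * dG \<beta> x2"
  obtains \<delta> where "0 < \<delta>" "\<delta> < x0" "\<delta> < x1" "\<delta> < x2"
    "0 < dG \<beta> (x0 + \<delta>)" "0 < dG \<beta> (x1 + \<delta>)"
    "0 < dG \<beta> (x0 + \<delta>) * dG \<beta> (x1 + \<delta>) + dG \<beta> (x0 + \<delta>) * dG \<beta> (x2 + \<delta>)
       + dG \<beta> (x1 + \<delta>) * dG \<beta> (x2 + \<delta>)"
proof -
  define c where "c x \<delta> = dG \<beta> (x + \<delta>)" for x \<delta>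
  have lim: "(c x \<longlongrightarrow> dG \<beta> x) (at_right 0)" if "0 < x" for x
    unfolding c_def dG_def using that \<beta> by real_asymp (simp add: field_simps)
  have lim_det: "((\<lambda>\<delta>. c x0 \<delta> * c x1 \<delta> + c x0 \<delta> * c x2 \<delta> + c x1 \<delta> * c x2 \<delta>) \<longlongrightarrow>
      dG \<beta> x0 * dG \<beta> x1 + dG \<beta> x0 * dG \<beta> x2 + dG \<beta> x1 * dG \<beta> x2) (at_right 0)"
    by (intro tendsto_intros lim pos)
  have "\<forall>\<^sub>F \<delta> in at_right 0. 0 < c x0 \<delta> \<and> 0 < c x1 \<delta> \<and>
      0 < c x0 \<delta> * c x1 \<delta> + c x0 \<delta> * c x2 \<delta> + c x1 \<delta> * c x2 \<delta>"
    using order_tendstoD(1)[OF lim[OF pos(1)] hess(1)] order_tendstoD(1)[OF lim[OF pos(2)] hess(2)]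
      order_tendstoD(1)[OF lim_det hess(3)]
    by eventually_elim blast
  then obtain b where "0 < b" and b: "\<And>\<delta>. 0 < \<delta> \<Longrightarrow> \<delta> < b \<Longrightarrow> 0 < c x0 \<delta> \<and> 0 < c x1 \<delta> \<and>
      0 < c x0 \<delta> * c x1 \<delta> + c x0 \<delta> * c x2 \<delta> + c x1 \<delta> * c x2 \<delta>"
    unfolding eventually_at_right_field by blast
  obtain \<delta> where "0 < \<delta>" "\<delta> < min b (min x0 (min x1 x2))"
    using dense \<open>0 < b\<close> pos by (metis min_less_iff_conj)
  then show thesis
    using that b[of \<delta>] unfolding c_def by auto
qed

lemma F_critical_le_nearby:
  assumes \<beta>: "\<beta> > 0" and sum: "x0 + x1 + x2 = 1"
    and crit: "G \<beta> x0 + 3 * r / 2 = G \<beta> x1" "G \<beta> x1 = G \<beta> x2"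
    and \<delta>: "0 < \<delta>" "\<delta> < x0" "\<delta> < x1" "\<delta> < x2"
    and c: "0 < dG \<beta> (x0 + \<delta>)" "0 < dG \<beta> (x1 + \<delta>)"
      "0 \<le> dG \<beta> (x0 + \<delta>) * dG \<beta> (x1 + \<delta>) + dG \<beta> (x0 + \<delta>) * dG \<beta> (x2 + \<delta>)
         + dG \<beta> (x1 + \<delta>) * dG \<beta> (x2 + \<delta>)"
    and d: "\<bar>d1\<bar> + \<bar>d2\<bar> \<le> \<delta>"
  shows "F \<beta> (x1, x2) r \<le> F \<beta> (x1 + d1, x2 + d2) r"
proof -
  define d0 where "d0 = - (d1 + d2)"
  have "\<bar>d0\<bar> \<le> \<delta>" "\<bar>d1\<bar> \<le> \<delta>" "\<bar>d2\<bar> \<le> \<delta>"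
    using d unfolding d0_def by linarith+
  then have lower:
      "F_site \<beta> x0 + (G \<beta> x0 + (ln 3 + 1) / \<beta>) * d0 + dG \<beta> (x0 + \<delta>) / 2 * d0\<^sup>2 \<le> F_site \<beta> (x0 + d0)"
      "F_site \<beta> x1 + (G \<beta> x1 + (ln 3 + 1) / \<beta>) * d1 + dG \<beta> (x1 + \<delta>) / 2 * d1\<^sup>2 \<le> F_site \<beta> (x1 + d1)"
      "F_site \<beta> x2 + (G \<beta> x2 + (ln 3 + 1) / \<beta>) * d2 + dG \<beta> (x2 + \<delta>) / 2 * d2\<^sup>2 \<le> F_site \<beta> (x2 + d2)"
    using F_site_lower_quadratic[OF \<beta> \<delta>(1)] \<delta> by auto
  have "1 - (x1 + d1) - (x2 + d2) = x0 + d0" "1 - x1 - x2 = x0"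
    using sum by (simp_all add: d0_def)
  then have "F \<beta> (x1 + d1, x2 + d2) r - F \<beta> (x1, x2) r = (F_site \<beta> (x0 + d0) - F_site \<beta> x0)
      + (F_site \<beta> (x1 + d1) - F_site \<beta> x1) + (F_site \<beta> (x2 + d2) - F_site \<beta> x2)
      + r * d0 - r / 2 * (d1 + d2)"
    by (simp only: F_eq_F_site_sum) (simp add: field_simps)
  moreover have "(G \<beta> x0 + (ln 3 + 1) / \<beta>) * d0 + (G \<beta> x1 + (ln 3 + 1) / \<beta>) * d1
      + (G \<beta> x2 + (ln 3 + 1) / \<beta>) * d2 + r * d0 - r / 2 * (d1 + d2) = 0"
  proof -
    have G0: "G \<beta> x0 = G \<beta> x1 - 3 * r / 2" and G2: "G \<beta> x2 = G \<beta> x1"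
      using crit by simp_all
    show ?thesis
      unfolding G0 G2 d0_def using \<beta> by (simp add: field_simps)
  qed
  moreover have "0 \<le> dG \<beta> (x0 + \<delta>) / 2 * d0\<^sup>2 + dG \<beta> (x1 + \<delta>) / 2 * d1\<^sup>2 + dG \<beta> (x2 + \<delta>) / 2 * d2\<^sup>2"
    using quadratic_form_nonneg[OF c, of d1 d2] by (simp add: d0_def power2_eq_square algebra_simps)
  ultimately show ?thesis
    using lower by linarith
qed

lemma F_local_min_at_critical:
  assumes \<beta>: "\<beta> > 0" and pos: "0 < x0" "0 < x1" "0 < x2" and sum: "x0 + x1 + x2 = 1"
    and crit: "G \<beta> x0 + 3 * r / 2 = G \<beta> x1" "G \<beta> x1 = G \<beta> x2"
    and hess: "0 < dG \<beta> x0" "0 < dG \<beta> x1"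
      "0 < dG \<beta> x0 * dG \<beta> x1 + dG \<beta> x0 * dG \<beta> x2 + dG \<beta> x1 * dG \<beta> x2"
  shows "is_local_min_on (\<lambda>x. F \<beta> x r) Xi (x1, x2)"
proof -
  obtain \<delta> where \<delta>: "0 < \<delta>" "\<delta> < x0" "\<delta> < x1" "\<delta> < x2"
    and c: "0 < dG \<beta> (x0 + \<delta>)" "0 < dG \<beta> (x1 + \<delta>)"
      "0 < dG \<beta> (x0 + \<delta>) * dG \<beta> (x1 + \<delta>) + dG \<beta> (x0 + \<delta>) * dG \<beta> (x2 + \<delta>)
         + dG \<beta> (x1 + \<delta>) * dG \<beta> (x2 + \<delta>)"
    using dG_shift_hessian_pos[OF \<beta> pos hess] by blast
  show ?thesis
    unfolding is_local_min_on_def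
  proof (intro conjI exI[of _ "\<delta> / 2"] ballI impI)
    show "(x1, x2) \<in> Xi"
      using pos sum by (simp add: Xi_def)
    show "0 < \<delta> / 2"
      using \<delta> by simp
    fix z assume "z \<in> Xi" "dist z (x1, x2) < \<delta> / 2"
    then have "\<bar>fst z - x1\<bar> + \<bar>snd z - x2\<bar> \<le> \<delta>"
      using dist_fst_le[of z "(x1, x2)"] dist_snd_le[of z "(x1, x2)"] by (simp add: dist_real_def)
    then have "F \<beta> (x1, x2) r \<le> F \<beta> (x1 + (fst z - x1), x2 + (snd z - x2)) r"
      using c by (intro F_critical_le_nearby[OF \<beta> sum crit \<delta>]) simp_all
    then show "F \<beta> (x1, x2) r \<le> F \<beta> z r"
      by simp
  qed
qed

lemma pairwise_products_pos_of_inverse_sum_neg: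
  fixes a0 a1 a2 :: real
  assumes "0 < a0" "0 < a1" "a2 < 0" "1 / a0 + 1 / a1 + 1 / a2 < 0"
  shows "0 < a0 * a1 + a0 * a2 + a1 * a2"
proof -
  have "a0 * a1 * a2 < 0"
    using assms by (simp add: mult_pos_neg)
  then have "0 < (1 / a0 + 1 / a1 + 1 / a2) * (a0 * a1 * a2)"
    using assms(4) by (simp add: mult_neg_neg)
  also have "\<dots> = a0 * a1 + a0 * a2 + a1 * a2"
    using assms by (simp add: field_simps)
  finally show ?thesis .
qed

lemma phi_eq_one_local_min:
  assumes "\<beta> > 2" "r \<ge> 0" "y \<le> g \<beta>" "phi \<beta> r y = 1"
  shows "is_local_min_on (\<lambda>x. F \<beta> x r) Xi (H \<beta> y, K \<beta> y)"
proof -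
  have \<beta>: "\<beta> > 0"
    using assms by simp
  have y: "y < g \<beta>"
    using phi_eq_one_below_g assms .
  then have y': "y - 3 * r / 2 < g \<beta>"
    using assms by simp
  define x0 x1 x2 where "x0 = H \<beta> (y - 3 * r / 2)" "x1 = H \<beta> y" "x2 = K \<beta> y"
  have x0: "0 < x0" "x0 < l \<beta>" "G \<beta> x0 = y - 3 * r / 2"
    unfolding x0_x1_x2_def using H_spec H_less_l \<beta> y' by auto
  have x1: "0 < x1" "x1 < l \<beta>" "G \<beta> x1 = y"
    unfolding x0_x1_x2_def using H_spec H_less_l \<beta> y by auto
  have x2: "l \<beta> < x2" "G \<beta> x2 = y"
    unfolding x0_x1_x2_def using K_spec K_greater_l \<beta> y by auto
  have "1 / dG \<beta> x0 + 1 / dG \<beta> x1 + 1 / dG \<beta> x2 < 0"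
    unfolding x0_x1_x2_def using phi_deriv_neg[OF \<beta> assms(2) y] assms(1,4) by simp
  then have "0 < dG \<beta> x0 * dG \<beta> x1 + dG \<beta> x0 * dG \<beta> x2 + dG \<beta> x1 * dG \<beta> x2"
    using dG_pos[OF \<beta>] dG_neg[OF \<beta>] x0 x1 x2
    by (intro pairwise_products_pos_of_inverse_sum_neg) auto
  moreover have "x0 + x1 + x2 = 1"
    using assms(4) by (simp add: phi_def x0_x1_x2_def)
  ultimately show ?thesis
    unfolding x0_x1_x2_def[symmetric] using dG_pos[OF \<beta>] x0 x1 x2 l_pos[OF \<beta>]
    by (intro F_local_min_at_critical[OF \<beta>]) auto
qed

theorem lemma5p8:
  fixes \<beta> r :: real
  assumes "\<beta> > 2" and "r > 0"
  shows "(\<exists>!y. y \<le> g \<beta> \<and> H \<beta> (y - 3 * r / 2) + H \<beta> y + K \<beta> y = 1)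
       \<and> (\<forall>y. y \<le> g \<beta> \<and> H \<beta> (y - 3 * r / 2) + H \<beta> y + K \<beta> y = 1
              \<longrightarrow> is_local_min_on (\<lambda>x. F \<beta> x r) Xi (H \<beta> y, K \<beta> y))"
proof -
  have r: "r \<ge> 0"
    using assms(2) by simp
  have "\<exists>!y. y \<le> g \<beta> \<and> phi \<beta> r y = 1"
    using phi_eq_one_exists[OF assms(1) r] phi_eq_one_unique[OF assms(1) r] by blast
  moreover have "is_local_min_on (\<lambda>x. F \<beta> x r) Xi (H \<beta> y, K \<beta> y)"
    if "y \<le> g \<beta>" "phi \<beta> r y = 1" for y
    using phi_eq_one_local_min[OF assms(1) r that] .
  ultimately show ?thesis
    unfolding phi_def by blast
qed

end
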